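(* Let $K \geq 1$ be an integer. Let $X$ be uniformly distributed on $[0,1)$, and let $K-1$ thresholds be drawn independently of each other and of $X$, each uniformly distributed on $[0,1)$; denote them in ascending order by $a_1 \leq a_2 \leq \cdots \leq a_{K-1}$, and set $a_0 = 0$, $a_K = 1$. Define the encoder $\alpha:[0,1) \to \{1,2,\ldots,K\}$ by $\alpha(x) = k$ for $x \in [a_{k-1}, a_k)$. Then the expected conditional entropy of the quantizer index given the thresholds, averaged over the thresholds, is $$R = \mathbb{E}\Big[ H\big(\alpha(X) \,\big|\, \{a_k\}_{k=1}^{K-1}\big)\Big] = \frac{1}{\ln 2}\sum_{k=2}^{K} \frac{1}{k}.$$
   Context: For fixed values of the thresholds, $H(\alpha(X) \mid \{a_k\}_{k=1}^{K-1})$ denotes the Shannon entropy in bits of the discrete random variable $\alpha(X)$ (with $X$ uniform on $[0,1)$ and the thresholds held fixed), i.e. $-\sum_{k} p_k \log_2 p_k$ where $p_k = \Pr[\alpha(X)=k]$, with the convention $0\log_2 0 = 0$; the outer expectation averages this quantity over the random thresholds. *)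

theory Defs
  imports "HOL-Probability.Probability"
begin

definition unif01 :: "real measure" where
  "unif01 = uniform_measure lborel {0..<1}"

definition thresh_space :: "nat \<Rightarrow> (nat \<Rightarrow> real) measure" where
  "thresh_space K = PiM {..<K-1} (\<lambda>_. unif01)"

definition sorted_thr :: "nat \<Rightarrow> (nat \<Rightarrow> real) \<Rightarrow> nat \<Rightarrow> real" where
  "sorted_thr K t k =
     (if k = 0 then 0 else if K \<le> k then 1 else sort (map t [0..<K-1]) ! (k-1))"

definition encoder :: "nat \<Rightarrow> (nat \<Rightarrow> real) \<Rightarrow> real \<Rightarrow> nat" where
  "encoder K t x = (THE k. k \<in> {1..K} \<and> sorted_thr K t (k-1) \<le> x \<and> x < sorted_thr K t k)"

definition cell_prob :: "nat \<Rightarrow> (nat \<Rightarrow> real) \<Rightarrow> nat \<Rightarrow> real" where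
  "cell_prob K t k = measure unif01 {x. encoder K t x = k}"

definition index_entropy :: "nat \<Rightarrow> (nat \<Rightarrow> real) \<Rightarrow> real" where
  "index_entropy K t =
     - (\<Sum>k\<in>{1..K}. (let p = cell_prob K t k in if p = 0 then 0 else p * log 2 p))"

end

theory Submission
  imports Defs
begin

text \<open>For a function \<open>g\<close> of the cell lengths let \<open>E\<^sub>n[g]\<close> be the mean of \<open>\<Sum>\<^sub>k g(cell\<^sub>k)\<close> over
  \<open>n\<close> uniform thresholds. A further uniform threshold \<open>u\<close> splits the cell containing it, and
  integrating over \<open>u\<close> a cell of length \<open>L\<close> contributes \<open>h(L) = 2 \<integral>\<^sub>0\<^sup>L g - L g(L)\<close> to the change,
  so \<open>E\<^sub>n\<^sub>+\<^sub>1[g] = E\<^sub>n[g] + E\<^sub>n[h]\<close>. For \<open>g(s) = -s ln s\<close> one gets \<open>h(s) = s\<^sup>2/2\<close>, and the same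
  recursion applied to powers gives \<open>E\<^sub>n[s\<^sup>2] = 2/(n+2)\<close>; hence each threshold raises the
  entropy (in nats) by \<open>1/(n+2)\<close>.\<close>

interpretation unif01: prob_space unif01
  unfolding unif01_def by (rule prob_space_uniform_measure) auto

lemma sets_unif01 [simp, measurable_cong]: "sets unif01 = sets borel"
  by (simp add: unif01_def)

lemma space_unif01 [simp]: "space unif01 = UNIV"
  by (simp add: unif01_def)

lemma AE_unif01: "AE x in unif01. 0 \<le> x \<and> x < 1"
  unfolding unif01_def by (rule AE_uniform_measureI) auto

lemma integral_unif01:
  fixes f :: "real \<Rightarrow> real"
  assumes [measurable]: "f \<in> borel_measurable borel"
  shows "integral\<^sup>L unif01 f = (\<integral>x. indicator {0..<1} x * f x \<partial>lborel)"
proof -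
  have density: "unif01 = density lborel (\<lambda>x. ennreal (indicator {0..<1::real} x))"
    unfolding unif01_def uniform_measure_def by (simp add: ennreal_indicator divide_ennreal_def)
  show ?thesis unfolding density by (subst integral_density) auto
qed

lemma measure_unif01:
  "B \<in> sets borel \<Longrightarrow> measure unif01 B = measure lborel ({0..<1} \<inter> B)"
  unfolding unif01_def by simp

lemma sorted_nth_le_iff_card:
  fixes ys :: "'a::linorder list"
  assumes s: "sorted ys" and j: "j < length ys"
  shows "ys ! j \<le> c \<longleftrightarrow> j < card {i. i < length ys \<and> ys ! i \<le> c}"
proof
  assume "ys ! j \<le> c"
  then have "{..j} \<subseteq> {i. i < length ys \<and> ys ! i \<le> c}"
    using j s by (auto intro: order_trans[OF sorted_nth_mono[OF s]])
  from card_mono[OF _ this] show "j < card {i. i < length ys \<and> ys ! i \<le> c}" by simp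
next
  assume h: "j < card {i. i < length ys \<and> ys ! i \<le> c}"
  show "ys ! j \<le> c"
  proof (rule ccontr)
    assume "\<not> ys ! j \<le> c"
    then have "{i. i < length ys \<and> ys ! i \<le> c} \<subseteq> {..<j}"
      using sorted_nth_mono[OF s, of j] by (auto simp: not_less) (meson leI order_trans)
    from card_mono[OF _ this] h show False by simp
  qed
qed

lemma card_nth_le_sort:
  fixes xs :: "'a::linorder list"
  shows "card {i. i < length (sort xs) \<and> sort xs ! i \<le> c} = card {i. i < length xs \<and> xs ! i \<le> c}"
proof -
  have "length (filter (\<lambda>y. y \<le> c) (sort xs)) = length (filter (\<lambda>y. y \<le> c) xs)"
    by (metis mset_filter mset_sort size_mset)
  then show ?thesis by (simp add: length_filter_conv_card)
qed

text \<open>The \<open>j\<close>-th order statistic is at most \<open>c\<close> iff more than \<open>j\<close> of the values are.\<close>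
lemma borel_measurable_sort_nth:
  fixes f :: "'a \<Rightarrow> nat \<Rightarrow> real"
  assumes f: "\<And>i. i < n \<Longrightarrow> (\<lambda>x. f x i) \<in> borel_measurable M" and j: "j < n"
  shows "(\<lambda>x. sort (map (f x) [0..<n]) ! j) \<in> borel_measurable M"
proof (subst borel_measurable_iff_le, intro allI)
  fix c :: real
  have "sort (map (f x) [0..<n]) ! j \<le> c \<longleftrightarrow> real j < (\<Sum>i<n. indicator {..c} (f x i))" for x
  proof -
    have "{i. i < n \<and> map (f x) [0..<n] ! i \<le> c} = {..<n} \<inter> {i. f x i \<le> c}" by auto
    moreover have "(\<Sum>i<n. indicator {..c} (f x i)) = (\<Sum>i<n. of_bool (f x i \<le> c) :: real)"
      by (simp add: indicator_def)
    ultimately show ?thesis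
      using sorted_nth_le_iff_card[of "sort (map (f x) [0..<n])" j c] j
        card_nth_le_sort[of "map (f x) [0..<n]" c]
      by simp
  qed
  moreover have "(\<lambda>x. \<Sum>i<n. indicator {..c} (f x i) :: real) \<in> borel_measurable M"
    using f by (intro borel_measurable_sum) (auto intro!: measurable_compose[OF _ borel_measurable_indicator])
  ultimately show "{x \<in> space M. sort (map (f x) [0..<n]) ! j \<le> c} \<in> sets M"
    by (simp del: indicator_simps) measurable
qed

definition cell_length :: "nat \<Rightarrow> (nat \<Rightarrow> real) \<Rightarrow> nat \<Rightarrow> real" where
  "cell_length K t k = max 0 (min 1 (sorted_thr K t k) - max 0 (sorted_thr K t (k-1)))"

definition cell_sum :: "(real \<Rightarrow> real) \<Rightarrow> nat \<Rightarrow> (nat \<Rightarrow> real) \<Rightarrow> real" where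
  "cell_sum g K t = (\<Sum>k\<in>{1..K}. g (cell_length K t k))"

lemma cell_length_bounds: "0 \<le> cell_length K t k \<and> cell_length K t k \<le> 1"
  unfolding cell_length_def by auto

lemma sorted_thr_0 [simp]: "sorted_thr K t 0 = 0"
  by (simp add: sorted_thr_def)

lemma sorted_thr_K [simp]: "K \<ge> 1 \<Longrightarrow> sorted_thr K t K = 1"
  by (simp add: sorted_thr_def)

lemma sorted_thr_mono: "1 \<le> i \<Longrightarrow> i \<le> j \<Longrightarrow> j < K \<Longrightarrow> sorted_thr K t i \<le> sorted_thr K t j"
  unfolding sorted_thr_def by (auto intro!: sorted_nth_mono)

definition in_cell :: "nat \<Rightarrow> (nat \<Rightarrow> real) \<Rightarrow> real \<Rightarrow> nat \<Rightarrow> bool" where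
  "in_cell K t x k \<longleftrightarrow> k \<in> {1..K} \<and> sorted_thr K t (k-1) \<le> x \<and> x < sorted_thr K t k"

lemma in_cell_unique:
  assumes "in_cell K t x j" "in_cell K t x j'"
  shows "j = j'"
proof (rule ccontr)
  assume "j \<noteq> j'"
  then obtain i i' where ii: "in_cell K t x i" "in_cell K t x i'" "i < i'"
    using assms by (metis linorder_neqE_nat)
  have "sorted_thr K t i \<le> sorted_thr K t (i' - 1)"
  proof (cases "i = i' - 1")
    case False
    with ii show ?thesis by (intro sorted_thr_mono) (auto simp: in_cell_def)
  qed simp
  with ii show False by (auto simp: in_cell_def)
qed

lemma in_cell_exists:
  assumes K: "K \<ge> 1" and x: "0 \<le> x" "x < 1"
  shows "\<exists>k. in_cell K t x k"
proof (cases "\<exists>j\<in>{1..K-1}. x < sorted_thr K t j")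
  case True
  define j where "j = (LEAST j. j \<in> {1..K-1} \<and> x < sorted_thr K t j)"
  have j: "j \<in> {1..K-1}" "x < sorted_thr K t j"
    unfolding j_def using True by (metis (mono_tags, lifting) LeastI)+
  have "\<not> x < sorted_thr K t (j-1)" if "j \<noteq> 1"
    using that j not_less_Least[of "j-1" "\<lambda>j. j \<in> {1..K-1} \<and> x < sorted_thr K t j"]
    unfolding j_def[symmetric] by auto
  then have "sorted_thr K t (j-1) \<le> x"
    using x by (cases "j = 1") auto
  then show ?thesis using j K by (auto simp: in_cell_def)
next
  case False
  then have "sorted_thr K t (K-1) \<le> x"
    using K x by (cases "K = 1") (auto simp: not_less)
  then show ?thesis using K x by (auto simp: in_cell_def)
qed

lemma encoder_eq_The: "encoder K t x = (THE k. in_cell K t x k)"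
  unfolding encoder_def in_cell_def ..

lemma encoder_eqI: "in_cell K t x k \<Longrightarrow> encoder K t x = k"
  unfolding encoder_eq_The by (blast intro: in_cell_unique)

lemma encoder_iff_in_cell:
  "K \<ge> 1 \<Longrightarrow> 0 \<le> x \<Longrightarrow> x < 1 \<Longrightarrow> encoder K t x = k \<longleftrightarrow> in_cell K t x k"
  using in_cell_exists in_cell_unique encoder_eqI by metis

text \<open>Outside \<open>[0, 1)\<close> the encoder takes the junk value \<open>THE j. False\<close>.\<close>
lemma encoder_level_set:
  "{x. encoder K t x = k} =
     {x. in_cell K t x k} \<union> {x. (\<forall>j. \<not> in_cell K t x j) \<and> (THE j::nat. False) = k}"
proof -
  have "encoder K t x = (THE j::nat. False)" if "\<forall>j. \<not> in_cell K t x j" for x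
  proof -
    from that have "in_cell K t x = (\<lambda>_. False)" by blast
    then show ?thesis unfolding encoder_eq_The by simp
  qed
  moreover have "encoder K t x = k \<longleftrightarrow> in_cell K t x k" if "in_cell K t x j" for x j
    using that encoder_eqI in_cell_unique by metis
  ultimately show ?thesis by (auto; metis)
qed

lemma encoder_level_set_borel: "{x. encoder K t x = k} \<in> sets borel"
  unfolding encoder_level_set in_cell_def by measurable

lemma cell_prob_eq_cell_length:
  assumes K: "K \<ge> 1" and k: "k \<in> {1..K}"
  shows "cell_prob K t k = cell_length K t k"
proof -
  have "{0..<1} \<inter> {x. encoder K t x = k} = {max 0 (sorted_thr K t (k-1))..<min 1 (sorted_thr K t k)}"
  proof (intro set_eqI)
    fix x
    show "x \<in> {0..<1} \<inter> {x. encoder K t x = k} \<longleftrightarrow>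
        x \<in> {max 0 (sorted_thr K t (k-1))..<min 1 (sorted_thr K t k)}"
      using encoder_iff_in_cell[OF K, of x t k] k by (cases "0 \<le> x \<and> x < 1") (auto simp: in_cell_def)
  qed
  then show ?thesis
    unfolding cell_prob_def measure_unif01[OF encoder_level_set_borel] cell_length_def
    by (cases "max 0 (sorted_thr K t (k-1)) \<le> min 1 (sorted_thr K t k)") auto
qed

lemma index_entropy_eq_cell_sum:
  assumes "K \<ge> 1"
  shows "index_entropy K t = cell_sum (\<lambda>s. - (s * ln s)) K t / ln 2"
proof -
  have "index_entropy K t = - (\<Sum>k\<in>{1..K}. cell_length K t k * ln (cell_length K t k) / ln 2)"
    unfolding index_entropy_def
    by (intro arg_cong[where f=uminus] sum.cong refl)
       (auto simp: cell_prob_eq_cell_length[OF assms] Let_def log_def)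
  then show ?thesis
    unfolding cell_sum_def by (simp add: sum_divide_distrib[symmetric] sum_negf)
qed

lemma borel_measurable_sorted_thr:
  assumes "\<And>i. i < K - 1 \<Longrightarrow> (\<lambda>x. F x i) \<in> borel_measurable M"
  shows "(\<lambda>x. sorted_thr K (F x) k) \<in> borel_measurable M"
proof (cases "k = 0 \<or> K \<le> k")
  case True
  then have "(\<lambda>x. sorted_thr K (F x) k) = (\<lambda>x. if k = 0 then 0 else 1)"
    by (auto simp: sorted_thr_def)
  then show ?thesis by simp
next
  case False
  then have "(\<lambda>x. sort (map (F x) [0..<K-1]) ! (k-1)) \<in> borel_measurable M"
    by (intro borel_measurable_sort_nth assms) auto
  then show ?thesis using False unfolding sorted_thr_def by simp
qed

lemma borel_measurable_cell_sum:
  assumes "g \<in> borel_measurable borel"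
    and "\<And>i. i < K - 1 \<Longrightarrow> (\<lambda>x. F x i) \<in> borel_measurable M"
  shows "(\<lambda>x. cell_sum g K (F x)) \<in> borel_measurable M"
  unfolding cell_sum_def cell_length_def
  by (intro borel_measurable_sum measurable_compose[OF _ assms(1)] borel_measurable_max
      borel_measurable_min borel_measurable_diff borel_measurable_sorted_thr assms(2) measurable_const)
     auto

definition next_point :: "real set \<Rightarrow> real \<Rightarrow> real" where
  "next_point P x = Min (insert 1 {y\<in>P. x < y})"

definition spacing_sum :: "(real \<Rightarrow> real) \<Rightarrow> real set \<Rightarrow> real" where
  "spacing_sum g P = (\<Sum>x\<in>P. g (next_point P x - x))"

lemma sum_gaps_sorted_list:
  fixes ys :: "real list"
  assumes "sorted ys" "ys \<noteq> []" "g 0 = 0"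
  shows "(\<Sum>k<length ys - 1. g (ys!(Suc k) - ys!k)) =
         (\<Sum>x\<in>{x\<in>set ys. x < last ys}. g (Min {y\<in>set ys. x < y} - x))"
  using assms(1,2)
proof (induction ys)
  case Nil then show ?case by simp
next
  case (Cons y zs)
  show ?case
  proof (cases zs)
    case Nil
    then show ?thesis by (auto intro: sum.neutral)
  next
    case (Cons h r)
    have s: "sorted zs" "y \<le> h" "\<forall>z\<in>set zs. h \<le> z" "\<forall>z\<in>set zs. y \<le> z"
      using Cons.prems Cons by auto
    have IH: "(\<Sum>k<length zs - 1. g (zs!(Suc k) - zs!k)) =
         (\<Sum>x\<in>{x\<in>set zs. x < last zs}. g (Min {y\<in>set zs. x < y} - x))"
      using Cons.IH s Cons by simp
    have L: "(\<Sum>k<length (y#zs) - 1. g ((y#zs)!(Suc k) - (y#zs)!k)) =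
        g (h - y) + (\<Sum>k<length zs - 1. g (zs!(Suc k) - zs!k))"
    proof -
      have "length (y#zs) - 1 = Suc (length zs - 1)" using Cons by simp
      then show ?thesis by (simp only: sum.lessThan_Suc_shift) (simp add: Cons)
    qed
    show ?thesis
    proof (cases "y = h")
      case True
      have "{x\<in>set (y#zs). x < last (y#zs)} = {x\<in>set zs. x < last zs}"
        and "\<And>x. {z\<in>set (y#zs). x < z} = {z\<in>set zs. x < z}"
        using True Cons by auto
      then show ?thesis unfolding L IH using True \<open>g 0 = 0\<close> by simp
    next
      case False
      then have yh: "y < h" using s by simp
      have ynot: "y \<notin> set zs" using s yh by force
      have "y < last zs"
        using yh s(3) Cons by (metis last_in_set list.discI order_less_le_trans)
      then have A: "{x\<in>set (y#zs). x < last (y#zs)} = insert y {x\<in>set zs. x < last zs}"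
        using Cons by auto
      have B: "{z\<in>set (y#zs). x < z} = {z\<in>set zs. x < z}" if "x \<in> set zs" for x
        using that s ynot by force
      have C: "Min {z\<in>set (y#zs). y < z} = h"
      proof -
        have "{z\<in>set (y#zs). y < z} = set zs" using s yh by force
        then show ?thesis using s Cons by (auto intro!: Min_eqI)
      qed
      have "(\<Sum>x\<in>{x\<in>set (y#zs). x < last (y#zs)}. g (Min {z\<in>set (y#zs). x < z} - x)) =
          g (h - y) + (\<Sum>x\<in>{x\<in>set zs. x < last zs}. g (Min {z\<in>set (y#zs). x < z} - x))"
        unfolding A C[symmetric] by (rule sum.insert) (use ynot in auto)
      also have "(\<Sum>x\<in>{x\<in>set zs. x < last zs}. g (Min {z\<in>set (y#zs). x < z} - x)) =
          (\<Sum>x\<in>{x\<in>set zs. x < last zs}. g (Min {z\<in>set zs. x < z} - x))"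
        by (intro sum.cong refl) (subst B, auto)
      finally show ?thesis unfolding L IH by simp
    qed
  qed
qed

text \<open>The cells are the gaps between consecutive points of \<open>{0} \<union> thresholds\<close>, the last one
  ending at \<open>1\<close>; \<open>g 0 = 0\<close> discards the empty cells produced by repeated thresholds.\<close>
lemma cell_sum_eq_spacing_sum:
  assumes t: "\<And>i. i < n \<Longrightarrow> 0 \<le> t i \<and> t i < 1" and g0: "g 0 = 0"
  shows "cell_sum g (Suc n) t = spacing_sum g (insert 0 (t ` {..<n}))"
proof -
  define ys where "ys = 0 # sort (map t [0..<n]) @ [1]"
  define P where "P = insert 0 (t ` {..<n})"
  have set_ys: "set ys = insert 1 P"
    unfolding ys_def P_def by auto
  have sorted: "sorted ys"
    unfolding ys_def using t by (force simp: sorted_append)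
  have len: "length ys - 1 = Suc n"
    unfolding ys_def by simp
  have nth: "ys ! k = sorted_thr (Suc n) t k" if "k \<le> Suc n" for k
    using that unfolding ys_def sorted_thr_def
    by (cases "k = 0") (auto simp: nth_append nth_Cons' not_less_eq_eq le_Suc_eq)
  have range: "0 \<le> ys ! k \<and> ys ! k \<le> 1" if "k \<le> Suc n" for k
  proof -
    have "ys ! k \<in> set ys" using that len by simp
    then show ?thesis unfolding set_ys P_def using t by force
  qed
  have "cell_sum g (Suc n) t = (\<Sum>k<Suc n. g (cell_length (Suc n) t (Suc k)))"
    unfolding cell_sum_def by (simp add: sum.atLeast1_atMost_eq)
  also have "\<dots> = (\<Sum>k<length ys - 1. g (ys!(Suc k) - ys!k))"
  proof (unfold len, intro sum.cong refl)
    fix k assume k: "k \<in> {..<Suc n}"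
    have "ys ! k \<le> ys ! Suc k"
      using sorted_nth_mono[OF sorted, of k "Suc k"] k len by simp
    then show "g (cell_length (Suc n) t (Suc k)) = g (ys!(Suc k) - ys!k)"
      unfolding cell_length_def using k nth[of k] nth[of "Suc k"] range[of k] range[of "Suc k"] by auto
  qed
  also have "\<dots> = (\<Sum>x\<in>{x\<in>set ys. x < last ys}. g (Min {y\<in>set ys. x < y} - x))"
    by (rule sum_gaps_sorted_list[of ys g, OF sorted _ g0]) (simp add: ys_def)
  also have "{x\<in>set ys. x < last ys} = P"
    unfolding set_ys using t by (auto simp: ys_def P_def)
  also have "(\<Sum>x\<in>P. g (Min {y\<in>set ys. x < y} - x)) = spacing_sum g P"
    unfolding spacing_sum_def next_point_def set_ys
    by (intro sum.cong refl arg_cong[where f=g] arg_cong2[where f="(-)"] arg_cong[where f=Min])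
       (auto simp: P_def t)
  finally show ?thesis unfolding P_def .
qed

lemma next_point_insert_less:
  assumes "finite P" "x < u"
  shows "next_point (insert u P) x = min u (next_point P x)"
proof -
  have "insert 1 {y\<in>insert u P. x < y} = insert u (insert 1 {y\<in>P. x < y})"
    using assms by auto
  then show ?thesis
    unfolding next_point_def using assms by (simp add: Min_insert)
qed

lemma next_point_insert_ge: "\<not> x < u \<Longrightarrow> next_point (insert u P) x = next_point P x"
  unfolding next_point_def by (metis (lifting) insert_iff)

definition split_gain :: "(real \<Rightarrow> real) \<Rightarrow> real set \<Rightarrow> real \<Rightarrow> real \<Rightarrow> real" where
  "split_gain g P x u =
     indicator {x<..<next_point P x} u * (g (u - x) + g (next_point P x - u) - g (next_point P x - x))"

locale unit_point_set =
  fixes P :: "real set"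
  assumes finite: "finite P" and subset: "P \<subseteq> {0..<1}" and zero: "0 \<in> P"
begin

lemma next_point_le_1: "next_point P x \<le> 1"
  unfolding next_point_def using finite by (intro Min_le) auto

lemma next_point_le: "y \<in> P \<Longrightarrow> x < y \<Longrightarrow> next_point P x \<le> y"
  unfolding next_point_def using finite by (intro Min_le) auto

lemma next_point_gt: "x \<in> P \<Longrightarrow> x < next_point P x"
  unfolding next_point_def using finite subset by (subst Min_gr_iff) auto

lemma gap_unique:
  assumes "x \<in> P" "y \<in> P" "u \<in> {x<..<next_point P x}" "u \<in> {y<..<next_point P y}"
  shows "x = y"
  using assms next_point_le[of x y] next_point_le[of y x] by (cases x y rule: linorder_cases) auto

lemma gap_exists:
  assumes "u \<notin> P" "0 \<le> u" "u < 1"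
  obtains a where "a \<in> P" "u \<in> {a<..<next_point P a}"
proof -
  define a where "a = Max {x\<in>P. x \<le> u}"
  have "finite {x\<in>P. x \<le> u}" "{x\<in>P. x \<le> u} \<noteq> {}"
    using finite zero assms(2) by auto
  then have "a \<in> P" "a \<le> u" and below: "\<And>x. x \<in> P \<Longrightarrow> x \<le> u \<Longrightarrow> x \<le> a"
    using Max_in Max_ge unfolding a_def by fastforce+
  moreover have "u < next_point P a"
    unfolding next_point_def using finite assms(3) below by (subst Min_gr_iff) force+
  ultimately show ?thesis using that assms(1) by (metis greaterThanLessThan_iff order_le_less)
qed

text \<open>Inserting \<open>u\<close> splits only the gap containing it.\<close>
lemma spacing_sum_insert:
  assumes "0 \<le> u" "u < 1" "g 0 = 0"
  shows "spacing_sum g (insert u P) = spacing_sum g P + (\<Sum>x\<in>P. split_gain g P x u)"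
proof (cases "u \<in> P")
  case True
  have "(\<Sum>x\<in>P. split_gain g P x u) = 0"
    using next_point_le[OF True]
    by (intro sum.neutral ballI) (fastforce simp: split_gain_def indicator_def)
  then show ?thesis using True by (simp add: insert_absorb)
next
  case False
  obtain a where a: "a \<in> P" "u \<in> {a<..<next_point P a}"
    using gap_exists[OF False assms(1,2)] .
  define b where "b = next_point P a"
  have no_gain: "split_gain g P x u = 0" if "x \<in> P" "x \<noteq> a" for x
    using gap_unique[OF that(1) a(1) _ a(2)] that by (auto simp: split_gain_def indicator_def)
  have next_u: "next_point (insert u P) u = b"
  proof -
    have "{y\<in>insert u P. u < y} = {y\<in>P. a < y}"
      using a next_point_le[of _ a] by force
    then show ?thesis
      unfolding b_def next_point_def by simp
  qed
  have next_a: "next_point (insert u P) a = u"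
    using a by (simp add: next_point_insert_less[OF finite])
  have next_x: "next_point (insert u P) x = next_point P x" if "x \<in> P" "x \<noteq> a" for x
  proof (cases "x < u")
    case True
    then have "x < a"
      using True that a next_point_le[of x a] by force
    then have "next_point P x \<le> u" using next_point_le[OF a(1)] a by force
    then show ?thesis using True by (simp add: next_point_insert_less[OF finite])
  qed (simp add: next_point_insert_ge)
  have "spacing_sum g (insert u P) = g (b - u) + (\<Sum>x\<in>P. g (next_point (insert u P) x - x))"
    unfolding spacing_sum_def using finite False next_u by simp
  also have "(\<Sum>x\<in>P. g (next_point (insert u P) x - x)) = g (u - a) + (\<Sum>x\<in>P - {a}. g (next_point P x - x))"
    using sum.remove[OF finite a(1), of "\<lambda>x. g (next_point (insert u P) x - x)"] next_a next_x by simp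
  also have "(\<Sum>x\<in>P - {a}. g (next_point P x - x)) = spacing_sum g P - g (b - a)"
    unfolding spacing_sum_def b_def using sum.remove[OF finite a(1), of "\<lambda>x. g (next_point P x - x)"] by simp
  also have "(\<Sum>x\<in>P. split_gain g P x u) = g (u - a) + g (b - u) - g (b - a)"
  proof -
    have "(\<Sum>x\<in>P - {a}. split_gain g P x u) = 0" using no_gain by simp
    then show ?thesis using sum.remove[OF finite a(1), of "\<lambda>x. split_gain g P x u"] a
      by (simp add: split_gain_def b_def)
  qed
  ultimately show ?thesis by simp
qed

end

definition integral_upto :: "(real \<Rightarrow> real) \<Rightarrow> real \<Rightarrow> real" where
  "integral_upto g L = (\<integral>s. indicator {0<..<L} s * g s \<partial>lborel)"

lemma integrable_indicator_bounded:
  fixes h :: "real \<Rightarrow> real"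
  assumes S: "S \<in> sets lborel" "emeasure lborel S < \<infinity>"
    and h: "h \<in> borel_measurable borel" and B: "\<And>u. u \<in> S \<Longrightarrow> \<bar>h u\<bar> \<le> B"
  shows "integrable lborel (\<lambda>u. indicator S u * h u)"
proof (rule Bochner_Integration.integrable_bound)
  show "integrable lborel (\<lambda>u. indicator S u * B)"
    using S by (intro integrable_mult_left) auto
  show "(\<lambda>u. indicator S u * h u) \<in> borel_measurable lborel"
    using S h by measurable
  show "AE x in lborel. norm (indicator S x * h x) \<le> norm (indicator S x * B)"
    using B by (intro AE_I2) (force simp: indicator_def abs_le_iff)
qed

locale unit_bounded =
  fixes g :: "real \<Rightarrow> real" and B :: real
  assumes measurable [measurable]: "g \<in> borel_measurable borel"
    and bounded: "\<And>s. 0 \<le> s \<Longrightarrow> s \<le> 1 \<Longrightarrow> \<bar>g s\<bar> \<le> B"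
begin

text \<open>Splitting a gap \<open>(x, x + L)\<close> at a point \<open>u\<close> drawn from it changes \<open>\<Sum> g\<close> by
  \<open>2 \<integral>\<^sub>0\<^sup>L g - L g L\<close> on integration, by the symmetry \<open>u - x \<leftrightarrow> x + L - u\<close>.\<close>
lemma integral_split_gap:
  assumes x: "0 \<le> x" and L: "0 \<le> L" and xL: "x + L \<le> 1"
  shows "integrable lborel (\<lambda>u. indicator {x<..<x+L} u * (g (u - x) + g (x + L - u) - g L))"
    and "(\<integral>u. indicator {x<..<x+L} u * (g (u - x) + g (x + L - u) - g L) \<partial>lborel)
       = 2 * integral_upto g L - L * g L"
proof -
  let ?S = "{x<..<x+L}"
  have fin: "emeasure lborel ?S < \<infinity>" using L by simp
  have i1: "integrable lborel (\<lambda>u. indicator ?S u * g (u - x))"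
    by (rule integrable_indicator_bounded[where B=B]) (use x L xL fin in \<open>auto intro!: bounded\<close>)
  have i2: "integrable lborel (\<lambda>u. indicator ?S u * g (x + L - u))"
    by (rule integrable_indicator_bounded[where B=B]) (use x L xL fin in \<open>auto intro!: bounded\<close>)
  have i3: "integrable lborel (\<lambda>u. indicator ?S u * g L)"
    using fin by (intro integrable_mult_left integrable_real_indicator) auto
  have eq: "(\<lambda>u. indicator ?S u * (g (u - x) + g (x + L - u) - g L)) =
      (\<lambda>u. indicator ?S u * g (u - x) + indicator ?S u * g (x + L - u) - indicator ?S u * g L)"
    by (auto simp: algebra_simps)
  show "integrable lborel (\<lambda>u. indicator ?S u * (g (u - x) + g (x + L - u) - g L))"
    unfolding eq using i1 i2 i3 by auto
  have "(\<integral>u. indicator ?S u * g (u - x) \<partial>lborel) = integral_upto g L"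
    unfolding integral_upto_def
    by (subst lborel_integral_real_affine[where c=1 and t=x])
       (auto simp: indicator_def intro!: Bochner_Integration.integral_cong)
  moreover have "(\<integral>u. indicator ?S u * g (x + L - u) \<partial>lborel) = integral_upto g L"
    unfolding integral_upto_def
    by (subst lborel_integral_real_affine[where c="-1" and t="x+L"])
       (auto simp: indicator_def intro!: Bochner_Integration.integral_cong)
  moreover have "(\<integral>u. indicator ?S u * g L \<partial>lborel) = L * g L"
    using L by simp
  ultimately show "(\<integral>u. indicator ?S u * (g (u - x) + g (x + L - u) - g L) \<partial>lborel)
       = 2 * integral_upto g L - L * g L"
    unfolding eq using i1 i2 i3 by simp
qed

lemma bound_nonneg: "0 \<le> B"
  using bounded[of 0] by simp

lemma abs_cell_sum_le: "\<bar>cell_sum g K t\<bar> \<le> K * B"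
proof -
  have "\<bar>cell_sum g K t\<bar> \<le> (\<Sum>k\<in>{1..K}. \<bar>g (cell_length K t k)\<bar>)"
    unfolding cell_sum_def by (rule sum_abs)
  also have "\<dots> \<le> (\<Sum>k\<in>{1..K}. B)"
    using cell_length_bounds by (intro sum_mono bounded) auto
  finally show ?thesis by simp
qed

context
  fixes P :: "real set"
  assumes P: "unit_point_set P"
begin

interpretation unit_point_set P by (fact P)

lemma abs_split_gain_le:
  assumes x: "x \<in> P"
  shows "\<bar>split_gain g P x u\<bar> \<le> 3 * B"
proof (cases "u \<in> {x<..<next_point P x}")
  case True
  have "0 \<le> x" "x < next_point P x" "next_point P x \<le> 1"
    using subset x next_point_gt[OF x] next_point_le_1[of x] by auto
  then have "\<bar>g (u - x)\<bar> \<le> B" "\<bar>g (next_point P x - u)\<bar> \<le> B" "\<bar>g (next_point P x - x)\<bar> \<le> B"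
    using True by (auto intro!: bounded)
  then show ?thesis using True unfolding split_gain_def by simp
qed (simp add: split_gain_def bound_nonneg)

lemma integrable_split_gain:
  assumes "x \<in> P"
  shows "integrable unif01 (split_gain g P x)"
proof (rule unif01.integrable_const_bound[where B="3*B"])
  show "AE u in unif01. norm (split_gain g P x u) \<le> 3 * B"
    using abs_split_gain_le[OF assms] by simp
  show "split_gain g P x \<in> borel_measurable unif01"
    unfolding split_gain_def by measurable
qed

lemma integral_split_gain:
  assumes x: "x \<in> P"
  defines "L \<equiv> next_point P x - x"
  shows "(\<integral>u. split_gain g P x u \<partial>unif01) = 2 * integral_upto g L - L * g L"
proof -
  have x0: "0 \<le> x" and L: "0 \<le> L" and xL: "x + L \<le> 1"
    using subset x next_point_gt[OF x] next_point_le_1[of x] by (auto simp: L_def)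
  have "(\<integral>u. split_gain g P x u \<partial>unif01) = (\<integral>u. indicator {0..<1} u * split_gain g P x u \<partial>lborel)"
    by (rule integral_unif01) (simp add: split_gain_def)
  also have "\<dots> = (\<integral>u. indicator {x<..<x+L} u * (g (u - x) + g (x + L - u) - g L) \<partial>lborel)"
    using x0 xL by (intro Bochner_Integration.integral_cong refl)
                   (auto simp: split_gain_def indicator_def L_def)
  finally show ?thesis using integral_split_gap(2)[OF x0 L xL] by simp
qed

end

end

interpretation unif01_product: product_sigma_finite "\<lambda>_::nat. unif01"
  unfolding product_sigma_finite_def by (simp add: unif01.sigma_finite_measure_axioms)

lemma thresh_space_Suc: "thresh_space (Suc n) = PiM {..<n} (\<lambda>_. unif01)"
  by (simp add: thresh_space_def)

lemma prob_space_thresh_space: "prob_space (thresh_space K)"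
  unfolding thresh_space_def by (intro prob_space_PiM unif01.prob_space_axioms)

lemma AE_thresh_space: "AE t in thresh_space (Suc n). \<forall>i\<in>{..<n}. 0 \<le> t i \<and> t i < 1"
  unfolding thresh_space_Suc
  by (intro AE_finite_allI finite_lessThan AE_PiM_component[where P="\<lambda>x. 0 \<le> x \<and> x < 1"]
      unif01.prob_space_axioms AE_unif01)

lemma borel_measurable_cell_sum_thresh_space:
  "g \<in> borel_measurable borel \<Longrightarrow> cell_sum g K \<in> borel_measurable (thresh_space K)"
  using borel_measurable_cell_sum[of g K "\<lambda>t. t" "thresh_space K"]
  unfolding thresh_space_def by simp

lemma (in unit_bounded) integrable_cell_sum: "integrable (thresh_space K) (cell_sum g K)"
proof -
  interpret prob_space "thresh_space K" by (rule prob_space_thresh_space)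
  show ?thesis
    using abs_cell_sum_le borel_measurable_cell_sum_thresh_space[OF measurable]
    by (intro integrable_const_bound[where B="K*B"]) auto
qed

locale cell_recursion = G: unit_bounded g B + H: unit_bounded h B' for g B h B' +
  assumes g0: "g 0 = 0" and h0: "h 0 = 0"
    and h_eq: "\<And>L. 0 \<le> L \<Longrightarrow> L \<le> 1 \<Longrightarrow> h L = 2 * integral_upto g L - L * g L"
begin

lemma integral_add_threshold:
  assumes t: "\<And>i. i < n \<Longrightarrow> 0 \<le> t i \<and> t i < 1"
  shows "(\<integral>u. cell_sum g (Suc (Suc n)) (t(n := u)) \<partial>unif01) = cell_sum g (Suc n) t + cell_sum h (Suc n) t"
proof -
  define P where "P = insert 0 (t ` {..<n})"
  interpret unit_point_set P
    by unfold_locales (use t in \<open>auto simp: P_def\<close>)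
  have P: "unit_point_set P" ..
  have "AE u in unif01. cell_sum g (Suc (Suc n)) (t(n := u)) = spacing_sum g P + (\<Sum>x\<in>P. split_gain g P x u)"
    using AE_unif01
  proof eventually_elim
    case (elim u)
    have "cell_sum g (Suc (Suc n)) (t(n := u)) = spacing_sum g (insert 0 ((t(n := u)) ` {..<Suc n}))"
      by (rule cell_sum_eq_spacing_sum[where g=g, OF _ g0]) (use t elim in \<open>auto simp: less_Suc_eq\<close>)
    also have "insert 0 ((t(n := u)) ` {..<Suc n}) = insert u P"
      unfolding P_def lessThan_Suc by auto
    also have "spacing_sum g (insert u P) = spacing_sum g P + (\<Sum>x\<in>P. split_gain g P x u)"
      using spacing_sum_insert[where g=g, OF _ _ g0] elim by simp
    finally show ?case .
  qed
  then have "(\<integral>u. cell_sum g (Suc (Suc n)) (t(n := u)) \<partial>unif01) =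
      (\<integral>u. spacing_sum g P + (\<Sum>x\<in>P. split_gain g P x u) \<partial>unif01)"
    by (intro integral_cong_AE borel_measurable_cell_sum[OF G.measurable])
       (auto simp: split_gain_def)
  also have "\<dots> = spacing_sum g P + (\<Sum>x\<in>P. \<integral>u. split_gain g P x u \<partial>unif01)"
    using G.integrable_split_gain[OF P]
    by (simp add: Bochner_Integration.integral_add Bochner_Integration.integral_sum
        unif01.prob_space flip: space_unif01)
  also have "(\<Sum>x\<in>P. \<integral>u. split_gain g P x u \<partial>unif01) = spacing_sum h P"
    unfolding spacing_sum_def
  proof (intro sum.cong refl)
    fix x assume x: "x \<in> P"
    then have "0 \<le> next_point P x - x" "next_point P x - x \<le> 1"
      using subset next_point_gt[OF x] next_point_le_1[of x] by auto
    then show "(\<integral>u. split_gain g P x u \<partial>unif01) = h (next_point P x - x)"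
      using G.integral_split_gain[OF P x] h_eq by simp
  qed
  also have "spacing_sum g P = cell_sum g (Suc n) t"
    unfolding P_def by (rule cell_sum_eq_spacing_sum[where g=g, OF t g0, symmetric])
  also have "spacing_sum h P = cell_sum h (Suc n) t"
    unfolding P_def by (rule cell_sum_eq_spacing_sum[where g=h, OF t h0, symmetric])
  finally show ?thesis .
qed

lemma integral_cell_sum_Suc:
  "(\<integral>t. cell_sum g (Suc (Suc n)) t \<partial>thresh_space (Suc (Suc n))) =
     (\<integral>t. cell_sum g (Suc n) t \<partial>thresh_space (Suc n)) + (\<integral>t. cell_sum h (Suc n) t \<partial>thresh_space (Suc n))"
proof -
  have "(\<integral>t. cell_sum g (Suc (Suc n)) t \<partial>thresh_space (Suc (Suc n))) =
      (\<integral>t. (\<integral>u. cell_sum g (Suc (Suc n)) (t(n := u)) \<partial>unif01) \<partial>thresh_space (Suc n))"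
    using G.integrable_cell_sum[of "Suc (Suc n)"]
    unfolding thresh_space_Suc lessThan_Suc by (intro unif01_product.product_integral_insert) auto
  also have "\<dots> = (\<integral>t. cell_sum g (Suc n) t + cell_sum h (Suc n) t \<partial>thresh_space (Suc n))"
  proof (rule integral_cong_AE)
    have "(\<lambda>p. cell_sum g (Suc (Suc n)) ((fst p)(n := snd p)))
        \<in> borel_measurable (thresh_space (Suc n) \<Otimes>\<^sub>M unif01)"
      by (rule borel_measurable_cell_sum[OF G.measurable]) (auto simp: thresh_space_Suc less_Suc_eq)
    then show "(\<lambda>t. \<integral>u. cell_sum g (Suc (Suc n)) (t(n := u)) \<partial>unif01) \<in> borel_measurable (thresh_space (Suc n))"
      by (intro unif01.borel_measurable_lebesgue_integral) (simp add: split_beta')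
    show "(\<lambda>t. cell_sum g (Suc n) t + cell_sum h (Suc n) t) \<in> borel_measurable (thresh_space (Suc n))"
      using G.integrable_cell_sum H.integrable_cell_sum by auto
    show "AE t in thresh_space (Suc n).
        (\<integral>u. cell_sum g (Suc (Suc n)) (t(n := u)) \<partial>unif01) = cell_sum g (Suc n) t + cell_sum h (Suc n) t"
      using AE_thresh_space[of n] by eventually_elim (rule integral_add_threshold, auto)
  qed
  also have "\<dots> = (\<integral>t. cell_sum g (Suc n) t \<partial>thresh_space (Suc n)) + (\<integral>t. cell_sum h (Suc n) t \<partial>thresh_space (Suc n))"
    using G.integrable_cell_sum H.integrable_cell_sum by (rule Bochner_Integration.integral_add)
  finally show ?thesis .
qed

end

lemma integral_upto_FTC:
  fixes g F :: "real \<Rightarrow> real"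
  assumes L: "0 \<le> L" and g: "g \<in> borel_measurable borel"
    and bounded: "\<And>s. 0 \<le> s \<Longrightarrow> s \<le> L \<Longrightarrow> \<bar>g s\<bar> \<le> B"
    and F: "continuous_on {0..L} F" "\<And>s. 0 < s \<Longrightarrow> s < L \<Longrightarrow> (F has_real_derivative g s) (at s)"
  shows "integral_upto g L = F L - F 0"
proof -
  have "einterval (ereal 0) (ereal L) = {0<..<L}"
    by (auto simp: einterval_def)
  then have "integral_upto g L = interval_lebesgue_integral lborel (ereal 0) (ereal L) g"
    using L unfolding integral_upto_def interval_lebesgue_integral_def set_lebesgue_integral_def
    by simp
  also have "\<dots> = (LINT s:{0..L}|lborel. g s)"
    using L by (rule interval_integral_Icc[simplified])
  also have "\<dots> = integral {0..L} g"
    using integrable_indicator_bounded[of "{0..L}" g B] g bounded L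
    by (intro set_borel_integral_eq_integral(2)) (simp add: set_integrable_def)
  also have "\<dots> = F L - F 0"
    using F by (intro integral_unique fundamental_theorem_of_calculus_interior[OF L])
               (auto simp: has_real_derivative_iff_has_vector_derivative)
  finally show ?thesis .
qed

lemma integral_upto_power:
  assumes "0 \<le> L" "L \<le> 1"
  shows "integral_upto (\<lambda>s. s ^ m) L = L ^ Suc m / Suc m"
proof -
  have "integral_upto (\<lambda>s. s ^ m) L = L ^ Suc m / Suc m - 0 ^ Suc m / Suc m"
  proof (rule integral_upto_FTC[where B=1])
    show "((\<lambda>s::real. s ^ Suc m / Suc m) has_real_derivative s ^ m) (at s)" for s
      using DERIV_cdivide[OF DERIV_pow[of "Suc m" s], of "Suc m"] by simp
  qed (use assms in \<open>auto intro!: continuous_intros simp: power_le_one\<close>)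
  then show ?thesis by simp
qed

definition shannon_term :: "real \<Rightarrow> real" where
  "shannon_term s = - (s * ln s)"

lemma shannon_term_measurable [measurable]: "shannon_term \<in> borel_measurable borel"
  unfolding shannon_term_def by measurable

lemma abs_shannon_term_le_1:
  assumes "0 \<le> s" "s \<le> 1"
  shows "\<bar>shannon_term s\<bar> \<le> 1"
proof (cases "s = 0")
  case False
  then have s: "0 < s" using assms by simp
  have "- ln s \<le> 1/s - 1"
    using ln_le_minus_one[of "1/s"] s by (simp add: ln_div)
  then have "s * (- ln s) \<le> 1 - s"
    using s mult_left_mono[of "- ln s" "1/s - 1" s] by (simp add: field_simps)
  moreover have "ln s \<le> 0" using s assms by simp
  ultimately show ?thesis
    using s assms by (auto simp: shannon_term_def mult_nonneg_nonpos)
qed (simp add: shannon_term_def)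

lemma tendsto_square_mult_ln_at_right_0: "((\<lambda>s::real. s^2 * ln s) \<longlongrightarrow> 0) (at_right 0)"
proof (rule Lim_null_comparison)
  have "eventually (\<lambda>s. s \<in> {0<..<1::real}) (at_right 0)"
    by (rule eventually_at_right_real) simp
  then show "eventually (\<lambda>s::real. norm (s^2 * ln s) \<le> s) (at_right 0)"
  proof eventually_elim
    case (elim s)
    then have "s * \<bar>s * ln s\<bar> \<le> s * 1"
      using abs_shannon_term_le_1[of s] by (intro mult_left_mono) (auto simp: shannon_term_def)
    then show ?case using elim by (simp add: power2_eq_square abs_mult mult.assoc)
  qed
qed (rule tendsto_ident_at)

lemma integral_upto_shannon_term:
  assumes L: "0 \<le> L" "L \<le> 1"
  shows "integral_upto shannon_term L = L^2/4 - L^2 * ln L / 2"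
proof (cases "L = 0")
  case True
  then show ?thesis by (simp add: integral_upto_def)
next
  case False
  then have L0: "0 < L" using L by simp
  define F where "F s = s^2/4 - s^2 * ln s / 2" for s :: real
  have "((\<lambda>s::real. s^2/4 - s^2 * ln s / 2) \<longlongrightarrow> 0^2/4 - 0/2) (at_right 0)"
    by (intro tendsto_diff tendsto_divide tendsto_power tendsto_ident_at tendsto_square_mult_ln_at_right_0
        tendsto_const) simp_all
  then have "(F \<longlongrightarrow> F 0) (at_right 0)"
    unfolding F_def by simp
  then have "continuous (at x within {0..L}) F" if "x \<in> {0..L}" for x
  proof (cases "x = 0")
    case False
    with that have "isCont F x" unfolding F_def by (auto intro!: continuous_intros)
    then show ?thesis by (rule continuous_at_imp_continuous_at_within)
  qed (simp add: continuous_within at_within_Icc_at_right[OF L0])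
  then have "continuous_on {0..L} F"
    by (simp add: continuous_on_eq_continuous_within)
  moreover have "(F has_real_derivative shannon_term s) (at s)" if "0 < s" for s
  proof -
    have "(F has_real_derivative 2 * s / 4 - (2 * s * ln s + s^2 * (1/s)) / 2) (at s)"
      unfolding F_def using that by (auto intro!: derivative_eq_intros)
    then show ?thesis
      using that by (simp add: shannon_term_def power2_eq_square field_simps)
  qed
  ultimately have "integral_upto shannon_term L = F L - F 0"
    using L abs_shannon_term_le_1 by (intro integral_upto_FTC[where B=1]) auto
  then show ?thesis by (simp add: F_def)
qed

lemma integral_cell_sum_one_cell: "(\<integral>t. cell_sum g (Suc 0) t \<partial>thresh_space (Suc 0)) = g 1"
  using prob_space.prob_space[OF prob_space_thresh_space[of "Suc 0"]]
  by (simp add: cell_sum_def cell_length_def)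

lemma unit_bounded_shannon_term: "unit_bounded shannon_term 1"
  by unfold_locales (auto intro: abs_shannon_term_le_1)

lemma cell_sum_cmult: "cell_sum (\<lambda>s. c * f s) K t = c * cell_sum f K t"
  unfolding cell_sum_def by (simp add: sum_distrib_left)

lemma moment_step_identity:
  fixes a b d x y :: real
  assumes "d > 0" "x \<ge> 0" "y \<ge> 0"
  shows "a * b / d + - x / (x + 2) * ((x + 2) * a * b / ((y + x + 2) * d)) =
    a * ((y + 2) * b) / ((y + x + 2) * d)"
proof -
  have "x + 2 \<noteq> 0" "y + x + 2 \<noteq> 0" using assms by auto
  then show ?thesis using assms by (simp add: divide_simps) algebra
qed

text \<open>Adding a threshold turns \<open>s\<^sup>j\<^sup>+\<^sup>1\<close> into \<open>- j/(j+2) \<cdot> s\<^sup>j\<^sup>+\<^sup>2\<close>.\<close>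
lemma integral_cell_sum_power:
  "(\<integral>t. cell_sum (\<lambda>s. s ^ Suc j) (Suc n) t \<partial>thresh_space (Suc n)) =
     fact (Suc j) * fact (Suc n) / fact (n + Suc j)"
proof (induction n arbitrary: j)
  case 0
  then show ?case by (simp add: integral_cell_sum_one_cell)
next
  case (Suc n)
  define c :: real where "c = - real j / (real j + 2)"
  interpret cell_recursion "\<lambda>s. s ^ Suc j" 1 "\<lambda>s. c * s ^ Suc (Suc j)" 1
  proof (unfold_locales)
    show "\<bar>c * s ^ Suc (Suc j)\<bar> \<le> 1" if "0 \<le> s" "s \<le> 1" for s :: real
    proof -
      have "\<bar>c\<bar> \<le> 1" unfolding c_def by simp
      then show ?thesis
        using that power_le_one[of s "Suc (Suc j)"] by (auto simp: abs_mult intro!: mult_le_one)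
    qed
    show "c * L ^ Suc (Suc j) = 2 * integral_upto (\<lambda>s. s ^ Suc j) L - L * L ^ Suc j"
      if "0 \<le> L" "L \<le> 1" for L :: real
      using that unfolding integral_upto_power[OF that] c_def by (simp add: field_simps)
  qed (use power_le_one[of _ "Suc j"] in auto)
  have "(\<integral>t. cell_sum (\<lambda>s. s ^ Suc j) (Suc (Suc n)) t \<partial>thresh_space (Suc (Suc n))) =
      fact (Suc j) * fact (Suc n) / fact (n + Suc j) +
      c * (fact (Suc (Suc j)) * fact (Suc n) / fact (n + Suc (Suc j)))"
    by (simp only: integral_cell_sum_Suc cell_sum_cmult Bochner_Integration.integral_mult_right_zero
        Suc.IH)
  also have "\<dots> = fact (Suc j) * fact (Suc (Suc n)) / fact (Suc n + Suc j)"
  proof -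
    have "fact (n + Suc (Suc j)) = (real n + j + 2) * fact (n + Suc j)"
      "fact (Suc n + Suc j) = (real n + j + 2) * fact (n + Suc j)"
      "fact (Suc (Suc j)) = (real j + 2) * fact (Suc j)"
      "fact (Suc (Suc n)) = (real n + 2) * fact (Suc n)"
      by (simp_all only: add_Suc_right add_Suc fact_Suc) (simp_all add: algebra_simps)
    then show ?thesis
      unfolding c_def by (simp only:) (rule moment_step_identity, simp_all)
  qed
  finally show ?case .
qed

lemma integral_cell_sum_shannon_term:
  "(\<integral>t. cell_sum shannon_term (Suc n) t \<partial>thresh_space (Suc n)) = (\<Sum>k=2..Suc n. 1 / real k)"
proof (induction n)
  case 0
  then show ?case by (simp add: integral_cell_sum_one_cell shannon_term_def)
next
  case (Suc n)
  interpret cell_recursion shannon_term 1 "\<lambda>s. (1/2) * s ^ Suc 1" 1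
  proof (unfold_locales)
    show "\<bar>(1/2) * s ^ Suc 1\<bar> \<le> 1" if "0 \<le> s" "s \<le> 1" for s :: real
      using that power_le_one[of s 2] by (simp add: power2_eq_square)
    show "(1/2) * L ^ Suc 1 = 2 * integral_upto shannon_term L - L * shannon_term L"
      if "0 \<le> L" "L \<le> 1" for L :: real
      using that by (simp add: integral_upto_shannon_term shannon_term_def power2_eq_square field_simps)
  qed (use abs_shannon_term_le_1[unfolded shannon_term_def] in \<open>auto simp: shannon_term_def\<close>)
  have "(\<integral>t. cell_sum shannon_term (Suc (Suc n)) t \<partial>thresh_space (Suc (Suc n))) =
      (\<Sum>k=2..Suc n. 1 / real k) + (1/2) * (fact (Suc 1) * fact (Suc n) / fact (n + Suc 1))"
    by (simp only: integral_cell_sum_Suc cell_sum_cmult Bochner_Integration.integral_mult_right_zero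
        Suc.IH integral_cell_sum_power)
  also have "(1/2) * (fact (Suc 1) * fact (Suc n) / fact (n + Suc 1)) = 1 / real (Suc (Suc n))"
  proof -
    have "fact (n + Suc 1) = (real n + 2) * fact (Suc n)" "fact (Suc 1) = (2::real)"
      by (simp_all only: add_Suc_right fact_Suc) simp_all
    then show ?thesis
      using fact_gt_zero[of "Suc n", where 'a=real] by (simp only:) (simp del: fact_Suc)
  qed
  also have "(\<Sum>k=2..Suc n. 1 / real k) + 1 / real (Suc (Suc n)) = (\<Sum>k=2..Suc (Suc n). 1 / real k)"
    by simp
  finally show ?case .
qed

theorem theorem2:
  fixes K :: nat
  assumes "K \<ge> 1"
  shows "integrable (thresh_space K) (index_entropy K)
    \<and> (\<integral>t. index_entropy K t \<partial>thresh_space K) = (1 / ln 2) * (\<Sum>k=2..K. 1 / real k)"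
proof -
  obtain n where K: "K = Suc n" using assms by (cases K) auto
  have entropy: "index_entropy K = (\<lambda>t. cell_sum shannon_term K t / ln 2)"
    unfolding shannon_term_def[abs_def] using index_entropy_eq_cell_sum[OF assms] by (intro ext) simp
  interpret unit_bounded shannon_term 1 by (rule unit_bounded_shannon_term)
  have "integrable (thresh_space K) (cell_sum shannon_term K)"
    by (rule integrable_cell_sum)
  moreover have "(\<integral>t. cell_sum shannon_term K t \<partial>thresh_space K) = (\<Sum>k=2..K. 1 / real k)"
    unfolding K by (rule integral_cell_sum_shannon_term)
  ultimately show ?thesis
    unfolding entropy by simp
qed

end
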